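(* Let $\mathcal{G}=(V,E)$ be a DAG and let $x,y\in V$ and $K\subseteq V$ be such that $K$ does not $d$-separate $x$ and $y$. Then there exists a path $p$ from $x$ to $y$ such that (i) no non-collider on $p$ is in $K$, (ii) for every collider $n_i$ on $p$ there exists a directed path $q_i$ from $n_i$ to some $k_i\in K$ (possibly of length zero, $n_i=k_i$), (iii) each $q_i$ intersects $p$ only at $n_i$, and (iv) the paths $q_i$ are pairwise node-disjoint.
   Context: A path in a DAG is a sequence of distinct nodes in which consecutive nodes are adjacent; a node $k$ on a path is a collider if the path has consecutive edges $u\to k\leftarrow w$, and a non-collider otherwise. A directed path is one all of whose edges point in the same direction along the path. $d$-separation: $K$ $d$-separates $x$ and $y$ if every path between them contains a non-collider in $K$ or a collider that is not in $K$ and has no descendant in $K$. *)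

theory Defs
  imports Main
begin

definition is_dag :: "'a set \<Rightarrow> ('a \<times> 'a) set \<Rightarrow> bool" where
  "is_dag V E \<longleftrightarrow> finite V \<and> E \<subseteq> V \<times> V \<and> acyclic E"

definition adjacent :: "('a \<times> 'a) set \<Rightarrow> 'a \<Rightarrow> 'a \<Rightarrow> bool" where
  "adjacent E u v \<longleftrightarrow> (u, v) \<in> E \<or> (v, u) \<in> E"

definition is_path :: "'a set \<Rightarrow> ('a \<times> 'a) set \<Rightarrow> 'a list \<Rightarrow> bool" where
  "is_path V E p \<longleftrightarrow> p \<noteq> [] \<and> distinct p \<and> set p \<subseteq> V \<and>
     (\<forall>i. Suc i < length p \<longrightarrow> adjacent E (p ! i) (p ! Suc i))"

definition path_between :: "'a set \<Rightarrow> ('a \<times> 'a) set \<Rightarrow> 'a \<Rightarrow> 'a \<Rightarrow> 'a list \<Rightarrow> bool" where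
  "path_between V E x y p \<longleftrightarrow> is_path V E p \<and> hd p = x \<and> last p = y"

definition is_directed_path :: "'a set \<Rightarrow> ('a \<times> 'a) set \<Rightarrow> 'a list \<Rightarrow> bool" where
  "is_directed_path V E q \<longleftrightarrow> q \<noteq> [] \<and> distinct q \<and> set q \<subseteq> V \<and>
     (\<forall>i. Suc i < length q \<longrightarrow> (q ! i, q ! Suc i) \<in> E)"

definition collider :: "('a \<times> 'a) set \<Rightarrow> 'a list \<Rightarrow> nat \<Rightarrow> bool" where
  "collider E p i \<longleftrightarrow> 0 < i \<and> Suc i < length p \<and>
     (p ! (i - 1), p ! i) \<in> E \<and> (p ! Suc i, p ! i) \<in> E"

text \<open>Non-collider: a node on the path (position i) that is not a collider (includes endpoints).\<close>
definition non_collider :: "('a \<times> 'a) set \<Rightarrow> 'a list \<Rightarrow> nat \<Rightarrow> bool" where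
  "non_collider E p i \<longleftrightarrow> i < length p \<and> \<not> collider E p i"

definition descendants :: "('a \<times> 'a) set \<Rightarrow> 'a \<Rightarrow> 'a set" where
  "descendants E v = {w. (v, w) \<in> E\<^sup>*}"

definition d_separates :: "'a set \<Rightarrow> ('a \<times> 'a) set \<Rightarrow> 'a set \<Rightarrow> 'a \<Rightarrow> 'a \<Rightarrow> bool" where
  "d_separates V E K x y \<longleftrightarrow>
     (\<forall>p. path_between V E x y p \<longrightarrow>
        (\<exists>i. non_collider E p i \<and> p ! i \<in> K) \<or>
        (\<exists>i. collider E p i \<and> p ! i \<notin> K \<and> descendants E (p ! i) \<inter> K = {}))"

end

(*
  Among all d-connecting paths from x to y whose colliders are each equipped with a directed
  witness path into K, take one minimising the length of the path plus the total length of the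
  witnesses. Cutting a witness at its first node in K shows that witnesses meet K only at their
  end. If the witness q of the collider at position i met the path or the witness of a later
  collider at position j (reversing the path if necessary), follow q to the first meeting point w
  and return to the path at position j, directly or backwards along the other witness. Splicing
  this detour into the path between positions i and j gives a d-connecting path with a smaller
  total: every node of the detour other than w is a non-collider outside K, and w, if it is a
  collider, is witnessed by the rest of q.
*)

theory Submission
  imports Defs
begin

lemma is_path_iff_successively:
  "is_path V E p \<longleftrightarrow> p \<noteq> [] \<and> distinct p \<and> set p \<subseteq> V \<and> successively (adjacent E) p"
  by (simp add: is_path_def successively_conv_nth)

lemma is_directed_path_iff_successively:
  "is_directed_path V E q \<longleftrightarrow>
     q \<noteq> [] \<and> distinct q \<and> set q \<subseteq> V \<and> successively (\<lambda>u v. (u, v) \<in> E) q"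
  by (simp add: is_directed_path_def successively_conv_nth)

lemma last_take_Suc: "n < length xs \<Longrightarrow> last (take (Suc n) xs) = xs ! n"
  by (simp add: take_Suc_conv_app_nth)

lemma is_directed_path_take:
  "is_directed_path V E q \<Longrightarrow> 0 < n \<Longrightarrow> is_directed_path V E (take n q)"
  by (auto simp: is_directed_path_def dest: in_set_takeD)

lemma is_directed_path_drop:
  "is_directed_path V E q \<Longrightarrow> n < length q \<Longrightarrow> is_directed_path V E (drop n q)"
  by (auto simp: is_directed_path_def dest: in_set_dropD)

lemma path_between_rev: "path_between V E x y p \<Longrightarrow> path_between V E y x (rev p)"
  by (auto simp: path_between_def is_path_iff_successively hd_rev last_rev adjacent_def
      elim: successively_mono)

lemma collider_imp_Suc_less: "collider E p k \<Longrightarrow> Suc k < length p"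
  by (simp add: collider_def)

lemma collider_append_left:
  "Suc k < length xs \<Longrightarrow> collider E (xs @ ys) k \<longleftrightarrow> collider E xs k"
  by (auto simp: collider_def nth_append)

lemma collider_append_right:
  "0 < k \<Longrightarrow> collider E (xs @ ys) (length xs + k) \<longleftrightarrow> collider E ys k"
  by (auto simp: collider_def nth_append)

lemma collider_rev:
  assumes "k < length p"
  shows "collider E (rev p) k \<longleftrightarrow> collider E p (length p - 1 - k)"
  using assms by (auto simp: collider_def rev_nth Suc_diff_Suc)

definition collider_nodes :: "('a \<times> 'a) set \<Rightarrow> 'a list \<Rightarrow> 'a set" where
  "collider_nodes E p = {p ! k | k. collider E p k}"

lemma finite_collider_nodes: "finite (collider_nodes E p)"
proof -
  have "collider_nodes E p \<subseteq> set p"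
    by (auto simp: collider_nodes_def dest!: collider_imp_Suc_less)
  then show ?thesis by (rule finite_subset) simp
qed

lemma collider_nodes_rev: "collider_nodes E (rev p) = collider_nodes E p"
proof -
  have "collider_nodes E (rev p) \<subseteq> collider_nodes E p" for p :: "'a list"
  proof
    fix v assume "v \<in> collider_nodes E (rev p)"
    then obtain k where k: "collider E (rev p) k" "v = rev p ! k"
      by (auto simp: collider_nodes_def)
    then have "k < length p" by (auto dest: collider_imp_Suc_less)
    with k show "v \<in> collider_nodes E p"
      by (auto simp: collider_nodes_def collider_rev rev_nth)
  qed
  from this this[of "rev p"] show ?thesis by auto
qed

lemma nth_notin_outside_segment:
  assumes "distinct p" "i \<le> k" "k \<le> j" "j < length p"
  shows "p ! k \<notin> set (take i p @ drop (Suc j) p)"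
  using assms by (auto simp: in_set_conv_nth nth_eq_iff_index_eq)

lemma first_common_element:
  assumes "set xs \<inter> set ys \<noteq> {}"
  obtains a b where "a < length xs" "b < length ys" "xs ! a = ys ! b"
    "set (take a xs) \<inter> set ys = {}"
proof -
  obtain a where a: "a < length xs" "xs ! a \<in> set ys"
    and least: "\<And>s. s < a \<Longrightarrow> xs ! s \<notin> set ys"
    using assms exists_least_iff[of "\<lambda>a. a < length xs \<and> xs ! a \<in> set ys"]
    by (metis disjoint_iff in_set_conv_nth order.strict_trans)
  moreover obtain b where "b < length ys" "xs ! a = ys ! b" using a(2) by (metis in_set_conv_nth)
  moreover have "set (take a xs) \<inter> set ys = {}"
    using least by (auto simp: in_set_conv_nth) metis
  ultimately show thesis using that by blast
qed

definition replace_segment :: "'a list \<Rightarrow> nat \<Rightarrow> nat \<Rightarrow> 'a list \<Rightarrow> 'a list" where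
  "replace_segment p i j s = take i p @ s @ drop (Suc j) p"

context
  fixes p s :: "'a list" and i j :: nat
  assumes ij: "i \<le> j" "j < length p"
    and ends: "s \<noteq> []" "hd s = p ! i" "last s = p ! j"
begin

lemma length_replace_segment:
  "length (replace_segment p i j s) = i + length s + (length p - Suc j)"
  using ij by (simp add: replace_segment_def)

lemma nth_replace_segment_prefix:
  "k \<le> i \<Longrightarrow> replace_segment p i j s ! k = p ! k"
  using ij ends by (cases "k = i") (auto simp: replace_segment_def nth_append hd_conv_nth)

lemma nth_replace_segment_detour:
  "k < length s \<Longrightarrow> replace_segment p i j s ! (i + k) = s ! k"
  using ij by (simp add: replace_segment_def nth_append)

lemma nth_replace_segment_suffix:
  assumes "j + t < length p"
  shows "replace_segment p i j s ! (i + length s - 1 + t) = p ! (j + t)"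
proof -
  obtain n where "length s = Suc n" using ends by (cases s) auto
  then show ?thesis using ij ends assms
    by (cases t) (auto simp: replace_segment_def nth_append last_conv_nth)
qed

lemma replace_segment_index_cases [consumes 1, case_names prefix detour suffix]:
  assumes "k < length (replace_segment p i j s)"
  obtains "k < i"
  | d where "d < length s" "k = i + d"
  | t where "0 < t" "j + t < length p" "k = i + length s - 1 + t"
proof -
  consider "k < i" | "i \<le> k" "k < i + length s" | "i + length s \<le> k" by linarith
  then show thesis
  proof cases
    case 2
    then show thesis using that(2)[of "k - i"] by simp
  next
    case 3
    have "0 < length s" using ends by simp
    then show thesis
      using that(3)[of "k - (i + length s - 1)"] 3 assms ij
      unfolding length_replace_segment by linarith
  qed (use that in blast)
qed

lemma collider_replace_segment_prefix:
  assumes "k < i"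
  shows "collider E (replace_segment p i j s) k \<longleftrightarrow> collider E p k"
proof -
  have "s = p ! i # tl s" using ends by (metis list.collapse)
  then have "replace_segment p i j s = take (Suc i) p @ tl s @ drop (Suc j) p"
    using ij by (metis append.assoc append_Cons append_Nil replace_segment_def
        take_Suc_conv_app_nth le_less_trans)
  moreover have "p = take (Suc i) p @ drop (Suc i) p" by simp
  moreover have "Suc k < length (take (Suc i) p)" using assms ij by simp
  ultimately show ?thesis by (metis collider_append_left)
qed

lemma collider_replace_segment_suffix:
  assumes "0 < t"
  shows "collider E (replace_segment p i j s) (i + length s - 1 + t) \<longleftrightarrow> collider E p (j + t)"
proof -
  have "s = butlast s @ [p ! j]" using ends by (metis append_butlast_last_id)
  moreover have "drop j p = p ! j # drop (Suc j) p" using ij by (simp add: Cons_nth_drop_Suc)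
  ultimately have "replace_segment p i j s = (take i p @ butlast s) @ drop j p"
    by (metis append.assoc append_Cons append_Nil replace_segment_def)
  moreover have "p = take j p @ drop j p" by simp
  moreover have "length (take i p @ butlast s) = i + length s - 1"
    "length (take j p) = j" using ij ends by (auto simp: Suc_leI)
  ultimately show ?thesis using assms by (metis collider_append_right)
qed

lemma hd_replace_segment: "hd (replace_segment p i j s) = hd p"
proof -
  have "hd (replace_segment p i j s) = p ! 0"
    using nth_replace_segment_prefix[of 0] ends by (simp add: replace_segment_def hd_conv_nth)
  then show ?thesis using ij by (metis hd_conv_nth list.size(3) not_less_zero)
qed

lemma last_replace_segment: "last (replace_segment p i j s) = last p"
proof -
  have "length (replace_segment p i j s) - 1 = i + length s - 1 + (length p - Suc j)"
    using length_replace_segment ends ij by (cases s) auto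
  then have "last (replace_segment p i j s) = p ! (j + (length p - Suc j))"
    using nth_replace_segment_suffix[of "length p - Suc j"] ij ends
    by (simp add: replace_segment_def last_conv_nth)
  moreover have "j + (length p - Suc j) = length p - 1" "p \<noteq> []" using ij by auto
  ultimately show ?thesis by (simp add: last_conv_nth)
qed

lemma path_between_replace_segment:
  assumes p: "path_between V E x y p" and s: "is_path V E s"
    and disj: "set s \<inter> set (take i p @ drop (Suc j) p) = {}"
  shows "path_between V E x y (replace_segment p i j s)"
proof -
  let ?A = "take i p" and ?B = "drop (Suc j) p"
  have pd: "distinct p" and pV: "set p \<subseteq> V" and padj: "successively (adjacent E) p"
    and hx: "hd p = x" and ly: "last p = y"
    using p by (auto simp: path_between_def is_path_iff_successively)
  have sd: "distinct s" and sV: "set s \<subseteq> V" and sadj: "successively (adjacent E) s"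
    using s by (auto simp: is_path_iff_successively)
  have step: "adjacent E (p ! m) (p ! Suc m)" if "Suc m < length p" for m
    using padj that by (simp add: successively_conv_nth)
  then have "successively (adjacent E) ?A" "successively (adjacent E) ?B"
    "?A \<noteq> [] \<Longrightarrow> adjacent E (last ?A) (hd s)"
    "?B \<noteq> [] \<Longrightarrow> adjacent E (last s) (hd ?B)"
    using ij ends step[of "i - 1"] by (auto simp: successively_conv_nth last_conv_nth hd_drop_conv_nth)
  then have adj: "successively (adjacent E) (?A @ s @ ?B)"
    using sadj ends by (auto simp: successively_append_iff)
  have "set ?A \<inter> set ?B = {}"
    using pd ij by (metis set_take_disj_set_drop_if_distinct le_SucI)
  then have dist: "distinct (?A @ s @ ?B)" using pd sd disj by auto
  have "set (?A @ s @ ?B) \<subseteq> V" using pV sV by (auto dest: in_set_takeD in_set_dropD)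
  moreover have "hd (replace_segment p i j s) = x" "last (replace_segment p i j s) = y"
    using hd_replace_segment last_replace_segment hx ly by simp_all
  ultimately show ?thesis using adj dist ends
    by (simp add: path_between_def is_path_iff_successively replace_segment_def)
qed

end

lemma apex_edges:
  assumes xs: "successively (\<lambda>u v. (u, v) \<in> E) (xs @ [w])"
    and ys: "successively (\<lambda>u v. (u, v) \<in> E) (ys @ [w])"
  shows "d < length xs \<Longrightarrow> ((xs @ w # rev ys) ! d, (xs @ w # rev ys) ! Suc d) \<in> E"
    and "length xs < d \<Longrightarrow> d \<le> length xs + length ys \<Longrightarrow>
      ((xs @ w # rev ys) ! d, (xs @ w # rev ys) ! (d - 1)) \<in> E"
proof -
  assume "d < length xs"
  then show "((xs @ w # rev ys) ! d, (xs @ w # rev ys) ! Suc d) \<in> E"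
    using successively_nth[OF xs, of d] by (auto simp: nth_append)
next
  assume d: "length xs < d" "d \<le> length xs + length ys"
  have "successively (\<lambda>u v. (v, u) \<in> E) (rev (ys @ [w]))"
    using ys by (simp only: successively_rev)
  then have "((w # rev ys) ! Suc e, (w # rev ys) ! e) \<in> E" if "e < length ys" for e
    using successively_nth[of _ "w # rev ys" e] that by simp
  from this[of "d - length xs - 1"] d show "((xs @ w # rev ys) ! d, (xs @ w # rev ys) ! (d - 1)) \<in> E"
    by (auto simp: nth_append Suc_diff_Suc)
qed

lemma walk_reaches:
  assumes "successively (\<lambda>u v. (u, v) \<in> E) q" "v \<in> set q"
  shows "(hd q, v) \<in> E\<^sup>*"
  using assms
proof (induction q)
  case (Cons u q)
  then show ?case
    by (cases q) (auto simp: successively_Cons intro: converse_rtrancl_into_rtrancl)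
qed simp

lemma acyclic_walk_distinct:
  assumes "acyclic E" "successively (\<lambda>u v. (u, v) \<in> E) q"
  shows "distinct q"
  using assms(2)
proof (induction q)
  case (Cons u q)
  have "u \<notin> set q"
  proof
    assume "u \<in> set q"
    then have "(hd q, u) \<in> E\<^sup>*" "(u, hd q) \<in> E"
      using Cons.prems walk_reaches by (auto simp: successively_Cons)
    then have "(u, u) \<in> E\<^sup>+" by (meson rtrancl_into_trancl2)
    with assms(1) show False by (simp add: acyclic_def)
  qed
  with Cons show ?case by (auto simp: successively_Cons)
qed simp

definition directed_path_to :: "'a set \<Rightarrow> ('a \<times> 'a) set \<Rightarrow> 'a set \<Rightarrow> 'a \<Rightarrow> 'a list \<Rightarrow> bool" where
  "directed_path_to V E K v q \<longleftrightarrow> is_directed_path V E q \<and> hd q = v \<and> last q \<in> K"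

(* Witnesses are indexed by the collider node rather than by its position on the path, so that
   they stay attached to their node when the path is modified. *)
definition d_connecting :: "'a set \<Rightarrow> ('a \<times> 'a) set \<Rightarrow> 'a set \<Rightarrow> 'a \<Rightarrow> 'a \<Rightarrow> 'a list \<Rightarrow>
    ('a \<Rightarrow> 'a list) \<Rightarrow> bool" where
  "d_connecting V E K x y p Q \<longleftrightarrow> path_between V E x y p
     \<and> (\<forall>k. non_collider E p k \<longrightarrow> p ! k \<notin> K)
     \<and> (\<forall>k. collider E p k \<longrightarrow> directed_path_to V E K (p ! k) (Q (p ! k)))"

definition witness_size :: "('a \<times> 'a) set \<Rightarrow> 'a list \<Rightarrow> ('a \<Rightarrow> 'a list) \<Rightarrow> nat" where
  "witness_size E p Q = length p + (\<Sum>v\<in>collider_nodes E p. length (Q v))"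

definition minimal_d_connecting :: "'a set \<Rightarrow> ('a \<times> 'a) set \<Rightarrow> 'a set \<Rightarrow> 'a \<Rightarrow> 'a \<Rightarrow> 'a list \<Rightarrow>
    ('a \<Rightarrow> 'a list) \<Rightarrow> bool" where
  "minimal_d_connecting V E K x y p Q \<longleftrightarrow> d_connecting V E K x y p Q
     \<and> (\<forall>r R. d_connecting V E K x y r R \<longrightarrow> witness_size E p Q \<le> witness_size E r R)"

lemma d_connecting_rev:
  assumes "d_connecting V E K x y p Q"
  shows "d_connecting V E K y x (rev p) Q"
proof -
  have *: "rev p ! k = p ! (length p - 1 - k)" "length p - 1 - k < length p" if "k < length p" for k
    using that by (auto simp: rev_nth)
  have "rev p ! k \<notin> K" if "non_collider E (rev p) k" for k
    using that assms *[of k] by (auto simp: d_connecting_def non_collider_def collider_rev)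
  moreover have "directed_path_to V E K (rev p ! k) (Q (rev p ! k))" if "collider E (rev p) k" for k
    using that assms *[of k] collider_imp_Suc_less[OF that]
    by (auto simp: d_connecting_def collider_rev)
  ultimately show ?thesis
    using assms by (auto simp: d_connecting_def path_between_rev)
qed

lemma witness_size_rev: "witness_size E (rev p) Q = witness_size E p Q"
  by (simp add: witness_size_def collider_nodes_rev)

lemma minimal_d_connecting_rev:
  "minimal_d_connecting V E K x y p Q \<Longrightarrow> minimal_d_connecting V E K y x (rev p) Q"
  unfolding minimal_d_connecting_def by (metis d_connecting_rev witness_size_rev)

locale dag =
  fixes V :: "'a set" and E :: "('a \<times> 'a) set"
  assumes is_dag: "is_dag V E"
begin

lemma acyclic: "acyclic E" and edges_in_V: "E \<subseteq> V \<times> V"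
  using is_dag by (simp_all add: is_dag_def)

lemma edge_not_sym: "(u, v) \<in> E \<Longrightarrow> (v, u) \<notin> E"
  using acyclic by (meson acyclic_def r_into_trancl' trancl_into_trancl)

lemma not_collider_if_edge_to_next: "(r ! k, r ! Suc k) \<in> E \<Longrightarrow> \<not> collider E r k"
  using edge_not_sym by (auto simp: collider_def)

lemma not_collider_if_edge_to_prev: "(r ! k, r ! (k - 1)) \<in> E \<Longrightarrow> \<not> collider E r k"
  using edge_not_sym by (auto simp: collider_def)

lemma directed_path_if_reachable:
  assumes "(v, w) \<in> E\<^sup>*" "w \<in> V"
  obtains q where "is_directed_path V E q" "hd q = v" "last q = w"
proof -
  have "\<exists>q. q \<noteq> [] \<and> set q \<subseteq> V \<and> successively (\<lambda>u v. (u, v) \<in> E) q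
      \<and> hd q = v \<and> last q = w"
    using assms(1)
  proof (induction rule: converse_rtrancl_induct)
    case base
    then show ?case using assms(2) by (intro exI[of _ "[w]"]) simp
  next
    case (step u v')
    then obtain q where "q \<noteq> []" "set q \<subseteq> V" "successively (\<lambda>u v. (u, v) \<in> E) q"
      "hd q = v'" "last q = w"
      by blast
    with step(1) edges_in_V show ?case
      by (intro exI[of _ "u # q"]) (auto simp: successively_Cons)
  qed
  then show ?thesis
    using that acyclic_walk_distinct[OF acyclic] by (auto simp: is_directed_path_iff_successively)
qed

lemma minimal_d_connecting_exists:
  assumes "K \<subseteq> V" "\<not> d_separates V E K x y"
  obtains p Q where "minimal_d_connecting V E K x y p Q"
proof -
  obtain p where p: "path_between V E x y p"
    and nc: "\<And>k. non_collider E p k \<Longrightarrow> p ! k \<notin> K"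
    and c: "\<And>k. collider E p k \<Longrightarrow> p ! k \<in> K \<or> descendants E (p ! k) \<inter> K \<noteq> {}"
    using assms(2) unfolding d_separates_def by blast
  have "\<exists>q. directed_path_to V E K v q" if "v \<in> collider_nodes E p" for v
  proof -
    from that obtain k where "collider E p k" "v = p ! k" by (auto simp: collider_nodes_def)
    then obtain w where "w \<in> K" "(v, w) \<in> E\<^sup>*"
      using c by (auto simp: descendants_def)
    then show ?thesis
      using assms(1) by (metis directed_path_if_reachable directed_path_to_def subsetD)
  qed
  then obtain Q where "\<And>v. v \<in> collider_nodes E p \<Longrightarrow> directed_path_to V E K v (Q v)"
    by metis
  then have "d_connecting V E K x y p Q"
    using p nc by (auto simp: d_connecting_def collider_nodes_def)
  then show ?thesis
    using that ex_has_least_nat[where P = "\<lambda>(r, R). d_connecting V E K x y r R" and k = "(p, Q)"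
        and m = "\<lambda>(r, R). witness_size E r R"]
    by (auto simp: minimal_d_connecting_def)
qed

lemma minimal_witness_avoids_K:
  assumes min: "minimal_d_connecting V E K x y p Q" and c: "collider E p i"
    and a: "a < length (Q (p ! i))"
  shows "set (take a (Q (p ! i))) \<inter> K = {}"
proof (rule ccontr)
  let ?q = "Q (p ! i)"
  assume "set (take a ?q) \<inter> K \<noteq> {}"
  then obtain s where s: "s < a" "?q ! s \<in> K"
    using a by (auto simp: in_set_conv_nth)
  define R where "R = Q(p ! i := take (Suc s) ?q)"
  have conn: "d_connecting V E K x y p Q"
    using min by (simp add: minimal_d_connecting_def)
  then have "directed_path_to V E K (p ! i) ?q"
    using c by (simp add: d_connecting_def)
  then have "directed_path_to V E K (p ! i) (take (Suc s) ?q)"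
    using s a by (auto simp: directed_path_to_def is_directed_path_take hd_take last_take_Suc)
  then have "d_connecting V E K x y p R"
    using conn by (auto simp: d_connecting_def R_def)
  moreover have "witness_size E p R < witness_size E p Q"
  proof -
    have "p ! i \<in> collider_nodes E p" using c by (auto simp: collider_nodes_def)
    moreover have "length (R (p ! i)) < length (Q (p ! i))" using s a by (simp add: R_def)
    ultimately have
      "(\<Sum>v\<in>collider_nodes E p. length (R v)) < (\<Sum>v\<in>collider_nodes E p. length (Q v))"
      by (intro sum_strict_mono_ex1 finite_collider_nodes) (auto simp: R_def)
    then show ?thesis by (simp add: witness_size_def)
  qed
  ultimately show False
    using min by (auto simp: minimal_d_connecting_def not_le[symmetric])
qed

(* The detour xs @ w # rev ys runs from p ! i along the witness of p ! i to w, and then against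
   the edges of the directed path ys @ [w] back to p ! j; its only possible collider is w. *)
context
  fixes K :: "'a set" and x y :: 'a and p :: "'a list" and Q :: "'a \<Rightarrow> 'a list"
    and i j :: nat and xs ys zs :: "'a list" and w :: 'a
  assumes conn: "d_connecting V E K x y p Q"
    and ij: "i < j" "j < length p" and ci: "collider E p i"
    and witness_i: "Q (p ! i) = xs @ w # zs" "xs \<noteq> []"
    and path_j: "is_directed_path V E (ys @ [w])" "hd (ys @ [w]) = p ! j"
    and witness_j: "ys \<noteq> [] \<Longrightarrow> collider E p j \<and> length ys < length (Q (p ! j))"
    and detour_distinct: "distinct (xs @ w # rev ys)"
    and detour_disjoint: "set (xs @ w # rev ys) \<inter> set (take i p @ drop (Suc j) p) = {}"
    and avoid_K: "set xs \<inter> K = {}" "set ys \<inter> K = {}"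
begin

abbreviation "detour \<equiv> xs @ w # rev ys"
abbreviation "shortcut \<equiv> replace_segment p i j detour"
abbreviation "outer_colliders \<equiv> {p ! k |k. collider E p k \<and> (k < i \<or> j < k)}"

lemma witness_i_path: "directed_path_to V E K (p ! i) (xs @ w # zs)"
  using conn ci witness_i(1)[symmetric] by (simp add: d_connecting_def)

lemma witness_i_prefix: "successively (\<lambda>u v. (u, v) \<in> E) (xs @ [w])" "set xs \<subseteq> V" "w \<in> V"
  using witness_i_path
  by (auto simp: directed_path_to_def is_directed_path_iff_successively successively_append_iff)

lemma detour_ends: "hd detour = p ! i" "last detour = p ! j"
  using witness_i_path witness_i(2) path_j(2) by (auto simp: directed_path_to_def last_rev hd_append)

lemma path_j_edges: "successively (\<lambda>u v. (u, v) \<in> E) (ys @ [w])"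
  using path_j by (simp add: is_directed_path_iff_successively)

lemma detour_is_path: "is_path V E detour"
proof -
  have ys: "successively (\<lambda>u v. (u, v) \<in> E) (ys @ [w])" "set ys \<subseteq> V"
    using path_j by (auto simp: is_directed_path_iff_successively)
  have "successively (\<lambda>u v. adjacent E v u) (ys @ [w])"
    using ys(1) by (rule successively_mono) (simp add: adjacent_def)
  then have "successively (adjacent E) (rev (ys @ [w]))"
    by (simp only: successively_rev)
  moreover have "successively (adjacent E) (xs @ [w])"
    using witness_i_prefix(1) by (rule successively_mono) (simp add: adjacent_def)
  ultimately have "successively (adjacent E) (xs @ [w] @ rev ys)"
    using witness_i(2) by (auto simp: successively_append_iff)
  then show ?thesis
    using detour_distinct witness_i_prefix ys(2) by (simp add: is_path_iff_successively)
qed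

lemma segment_conditions:
  "i \<le> j" "j < length p" "detour \<noteq> []" "hd detour = p ! i" "last detour = p ! j"
  using ij detour_ends by simp_all

lemmas nth_shortcut_prefix = nth_replace_segment_prefix[OF segment_conditions]
  and nth_shortcut_detour = nth_replace_segment_detour[OF segment_conditions]
  and nth_shortcut_suffix = nth_replace_segment_suffix[OF segment_conditions]
  and collider_shortcut_prefix = collider_replace_segment_prefix[OF segment_conditions]
  and collider_shortcut_suffix = collider_replace_segment_suffix[OF segment_conditions]
  and shortcut_index_cases = replace_segment_index_cases[OF segment_conditions, consumes 1,
    case_names prefix detour suffix]

lemma length_shortcut: "length shortcut = i + length xs + length ys + (length p - j)"
  using length_replace_segment[OF segment_conditions] ij by simp

lemma shortcut_apex: "shortcut ! (i + length xs) = w"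
  using nth_shortcut_detour[of "length xs"] by simp

lemma collider_shortcut_apex:
  assumes "Suc (i + length xs) < length shortcut" "(shortcut ! Suc (i + length xs), w) \<in> E"
  shows "collider E shortcut (i + length xs)"
proof -
  have "i + length xs - 1 = i + (length xs - 1)" using witness_i(2) by (cases xs) auto
  then have "shortcut ! (i + length xs - 1) = last xs"
    using nth_shortcut_detour[of "length xs - 1"] witness_i(2)
    by (simp add: nth_append last_conv_nth)
  moreover have "(last xs, w) \<in> E"
    using witness_i_prefix(1) witness_i(2) by (simp add: successively_append_iff)
  ultimately show ?thesis
    using assms witness_i(2) shortcut_apex by (simp add: collider_def)
qed

lemma apex_notin_K: "\<not> collider E shortcut (i + length xs) \<Longrightarrow> w \<notin> K"
proof (cases "ys = []")
  case True
  assume nc: "\<not> collider E shortcut (i + length xs)"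
  \<comment> \<open>Then w = p ! j, which can lie in K only as a collider of p, and as such stays a collider.\<close>
  have "w = p ! j" using path_j(2) True by simp
  moreover have "\<not> collider E p j"
  proof
    assume cj: "collider E p j"
    then have "Suc j < length p" "(p ! Suc j, w) \<in> E"
      using \<open>w = p ! j\<close> by (auto simp: collider_def)
    moreover have "Suc (i + length xs) < length shortcut"
      using length_shortcut \<open>Suc j < length p\<close> ij(1) by linarith
    moreover have "shortcut ! Suc (i + length xs) = p ! Suc j"
      using nth_shortcut_suffix[of 1] \<open>Suc j < length p\<close> True by simp
    ultimately have "collider E shortcut (i + length xs)"
      by (intro collider_shortcut_apex) auto
    with nc show False ..
  qed
  ultimately show ?thesis
    using conn ij by (auto simp: d_connecting_def non_collider_def)
next
  case False
  assume nc: "\<not> collider E shortcut (i + length xs)"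
  have "(last ys, w) \<in> E"
    using path_j(1) False by (simp add: is_directed_path_iff_successively successively_append_iff)
  moreover have "Suc (i + length xs) < length shortcut"
    using length_shortcut False ij(2) by (cases ys) auto
  moreover have "shortcut ! Suc (i + length xs) = last ys"
    using nth_shortcut_detour[of "Suc (length xs)"] False by (simp add: nth_append rev_nth last_conv_nth)
  ultimately have "collider E shortcut (i + length xs)"
    by (intro collider_shortcut_apex) auto
  with nc show ?thesis ..
qed

lemma collider_shortcut_detour:
  assumes d: "d < length detour" and c: "collider E shortcut (i + d)"
  shows "d = length xs"
proof (rule ccontr)
  note edges = apex_edges[OF witness_i_prefix(1) path_j_edges]
  assume "d \<noteq> length xs"
  then consider "d < length xs" | "length xs < d" by linarith
  then show False
  proof cases
    case 1
    then have "(shortcut ! (i + d), shortcut ! Suc (i + d)) \<in> E"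
      using edges(1) nth_shortcut_detour[of d] nth_shortcut_detour[of "Suc d"] by simp
    with c show False using not_collider_if_edge_to_next by blast
  next
    case 2
    then have "i + d - 1 = i + (d - 1)" by simp
    with 2 d have "(shortcut ! (i + d), shortcut ! (i + d - 1)) \<in> E"
      using edges(2) nth_shortcut_detour[of d] nth_shortcut_detour[of "d - 1"] by simp
    with c show False using not_collider_if_edge_to_prev by blast
  qed
qed

lemma collider_shortcut_cases:
  assumes c: "collider E shortcut k"
  shows "shortcut ! k = w \<or> shortcut ! k \<in> outer_colliders"
proof -
  have "k < length shortcut" using collider_imp_Suc_less[OF c] by simp
  then show ?thesis
  proof (cases rule: shortcut_index_cases)
    case prefix
    then show ?thesis using c collider_shortcut_prefix nth_shortcut_prefix by fastforce
  next
    case (detour d)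
    then show ?thesis using c collider_shortcut_detour shortcut_apex by blast
  next
    case (suffix t)
    then have "collider E p (j + t)" "shortcut ! k = p ! (j + t)" "j < j + t"
      using c collider_shortcut_suffix nth_shortcut_suffix by auto
    then show ?thesis by blast
  qed
qed

lemma non_collider_shortcut_notin_K:
  assumes nc: "non_collider E shortcut k"
  shows "shortcut ! k \<notin> K"
proof -
  have nck: "\<not> collider E shortcut k" using nc by (simp add: non_collider_def)
  from nc have "k < length shortcut" by (simp add: non_collider_def)
  then show ?thesis
  proof (cases rule: shortcut_index_cases)
    case prefix
    then have "non_collider E p k"
      using nck ij collider_shortcut_prefix[of k] by (simp add: non_collider_def)
    then show ?thesis using prefix conn nth_shortcut_prefix by (simp add: d_connecting_def)
  next
    case (detour d)
    then have "shortcut ! k \<in> set detour"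
      using nth_shortcut_detour[of d] by (metis nth_mem)
    moreover have "d = length xs" if "shortcut ! k = w"
      using that detour nth_shortcut_detour[of d] shortcut_apex detour_distinct
        nth_eq_iff_index_eq[of detour d "length xs"] by simp
    ultimately show ?thesis using avoid_K apex_notin_K nck detour by auto
  next
    case (suffix t)
    then have "non_collider E p (j + t)"
      using nck collider_shortcut_suffix by (simp add: non_collider_def)
    then show ?thesis using suffix conn nth_shortcut_suffix by (simp add: d_connecting_def)
  qed
qed

lemma outer_colliders_subset: "outer_colliders \<subseteq> set (take i p @ drop (Suc j) p)"
proof
  fix v assume "v \<in> outer_colliders"
  then obtain k where k: "collider E p k" "k < i \<or> j < k" "v = p ! k" by blast
  then have "k < length p" using collider_imp_Suc_less by fastforce
  then show "v \<in> set (take i p @ drop (Suc j) p)"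
    using k by (auto simp: in_set_conv_nth intro: exI[of _ "k - Suc j"])
qed

lemma apex_notin_outer_colliders: "w \<notin> outer_colliders"
  using outer_colliders_subset detour_disjoint by auto

lemma apex_witness: "directed_path_to V E K w (w # zs)"
proof -
  have "is_directed_path V E (drop (length xs) (xs @ w # zs))"
    using witness_i_path by (intro is_directed_path_drop) (auto simp: directed_path_to_def)
  then show ?thesis using witness_i_path by (simp add: directed_path_to_def)
qed

lemma d_connecting_shortcut: "d_connecting V E K x y shortcut (Q(w := w # zs))"
proof -
  have "path_between V E x y shortcut"
    using conn detour_is_path detour_disjoint
    by (intro path_between_replace_segment[OF segment_conditions]) (auto simp: d_connecting_def)
  moreover have "directed_path_to V E K (shortcut ! k) ((Q(w := w # zs)) (shortcut ! k))"
    if "collider E shortcut k" for k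
    using collider_shortcut_cases[OF that] apex_witness apex_notin_outer_colliders conn
    by (auto simp: d_connecting_def)
  ultimately show ?thesis
    using non_collider_shortcut_notin_K by (simp add: d_connecting_def)
qed

lemma finite_outer_colliders: "finite outer_colliders"
  by (rule finite_subset[OF _ finite_collider_nodes[of E p]]) (auto simp: collider_nodes_def)

lemma shortcut_witness_sum:
  "(\<Sum>v\<in>collider_nodes E shortcut. length ((Q(w := w # zs)) v))
     \<le> Suc (length zs) + (\<Sum>v\<in>outer_colliders. length (Q v))"
proof -
  let ?R = "Q(w := w # zs)"
  have "collider_nodes E shortcut \<subseteq> insert w outer_colliders"
    using collider_shortcut_cases by (auto simp: collider_nodes_def)
  then have "(\<Sum>v\<in>collider_nodes E shortcut. length (?R v))
      \<le> (\<Sum>v\<in>insert w outer_colliders. length (?R v))"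
    using finite_outer_colliders by (intro sum_mono2) auto
  also have "\<dots> = Suc (length zs) + (\<Sum>v\<in>outer_colliders. length (?R v))"
    using finite_outer_colliders apex_notin_outer_colliders by simp
  also have "(\<Sum>v\<in>outer_colliders. length (?R v)) = (\<Sum>v\<in>outer_colliders. length (Q v))"
    using apex_notin_outer_colliders by (intro sum.cong) auto
  finally show ?thesis .
qed

lemma witness_sum_lower_bound:
  "length (Q (p ! i)) + (if ys = [] then 0 else length (Q (p ! j)))
     + (\<Sum>v\<in>outer_colliders. length (Q v)) \<le> (\<Sum>v\<in>collider_nodes E p. length (Q v))"
proof -
  let ?J = "if ys = [] then {} else {p ! j}"
  have "distinct p" using conn by (simp add: d_connecting_def path_between_def is_path_def)
  then have "p ! i \<notin> outer_colliders" "p ! j \<notin> outer_colliders" "p ! i \<noteq> p ! j"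
    using outer_colliders_subset nth_notin_outside_segment[of p i i j]
      nth_notin_outside_segment[of p i j j] nth_eq_iff_index_eq[of p i j] ij by auto
  then have "(\<Sum>v\<in>insert (p ! i) (?J \<union> outer_colliders). length (Q v))
      = length (Q (p ! i)) + (if ys = [] then 0 else length (Q (p ! j)))
        + (\<Sum>v\<in>outer_colliders. length (Q v))"
    using finite_outer_colliders by (simp add: sum.union_disjoint)
  moreover have "(\<Sum>v\<in>insert (p ! i) (?J \<union> outer_colliders). length (Q v))
      \<le> (\<Sum>v\<in>collider_nodes E p. length (Q v))"
    using ci witness_j by (intro sum_mono2 finite_collider_nodes) (auto simp: collider_nodes_def)
  ultimately show ?thesis by linarith
qed

lemma witness_size_shortcut: "witness_size E shortcut (Q(w := w # zs)) < witness_size E p Q"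
proof -
  have "length ys < (if ys = [] then 0 else length (Q (p ! j))) + j - i"
    using witness_j ij by (cases "ys = []") auto
  then show ?thesis
    using shortcut_witness_sum witness_sum_lower_bound witness_i(1) length_shortcut ij
    by (simp add: witness_size_def)
qed

lemma shortcut_not_minimal: "\<not> minimal_d_connecting V E K x y p Q"
  using d_connecting_shortcut witness_size_shortcut
  by (auto simp: minimal_d_connecting_def not_le[symmetric])

end

lemma minimal_witness_no_later_hit:
  assumes min: "minimal_d_connecting V E K x y p Q" and ci: "collider E p i"
    and a: "0 < a" "a < length (Q (p ! i))"
    and hit: "Q (p ! i) ! a = p ! j" "i < j" "j < length p"
    and first: "set (take a (Q (p ! i))) \<inter> set p \<subseteq> {p ! i}"
  shows False
proof -
  let ?q = "Q (p ! i)"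
  have conn: "d_connecting V E K x y p Q" using min by (simp add: minimal_d_connecting_def)
  then have q: "directed_path_to V E K (p ! i) ?q" using ci by (simp add: d_connecting_def)
  have pd: "distinct p" using conn by (simp add: d_connecting_def path_between_def is_path_def)
  have "p ! i \<notin> set (take i p @ drop (Suc j) p)" "p ! j \<notin> set (take i p @ drop (Suc j) p)"
    using nth_notin_outside_segment[OF pd, of i i j] nth_notin_outside_segment[OF pd, of i j j] hit
    by simp_all
  moreover have "set (take i p @ drop (Suc j) p) \<subseteq> set p"
    by (auto dest: in_set_takeD in_set_dropD)
  ultimately have "set (take a ?q @ [?q ! a]) \<inter> set (take i p @ drop (Suc j) p) = {}"
    using first hit(1) by auto
  moreover have "distinct (take a ?q @ [?q ! a])"
    using q a by (simp add: directed_path_to_def is_directed_path_def take_Suc_conv_app_nth[symmetric])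
  moreover have "is_directed_path V E [?q ! a]"
    using q a by (auto simp: directed_path_to_def is_directed_path_def)
  moreover have "set (take a ?q) \<inter> K = {}"
    using minimal_witness_avoids_K[OF min ci a(2)] .
  moreover have "?q = take a ?q @ ?q ! a # drop (Suc a) ?q" "take a ?q \<noteq> []"
    using a by (auto simp: id_take_nth_drop)
  ultimately show False
    using shortcut_not_minimal[OF conn hit(2,3) ci, of "take a ?q" "?q ! a" "drop (Suc a) ?q" "[]"]
      min hit(1) by simp
qed

lemma minimal_witness_meets_path_only_at_collider:
  assumes min: "minimal_d_connecting V E K x y p Q" and ci: "collider E p i"
  shows "set (Q (p ! i)) \<inter> set p = {p ! i}"
proof (rule ccontr)
  let ?q = "Q (p ! i)"
  have "directed_path_to V E K (p ! i) ?q"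
    using min ci by (simp add: minimal_d_connecting_def d_connecting_def)
  then have q: "?q = p ! i # tl ?q" "distinct ?q"
    by (auto simp: directed_path_to_def is_directed_path_def) (metis list.collapse)
  have i: "i < length p" using collider_imp_Suc_less[OF ci] by simp
  assume "set ?q \<inter> set p \<noteq> {p ! i}"
  then have "set (tl ?q) \<inter> set p \<noteq> {}"
    using q(1) i by (metis Int_insert_left_if1 list.simps(15) nth_mem)
  then obtain a j where a: "a < length (tl ?q)" and j: "j < length p" "?q ! Suc a = p ! j"
    and first: "set (take a (tl ?q)) \<inter> set p = {}"
    by (rule first_common_element) (metis nth_Cons_Suc q(1))
  have "take (Suc a) ?q = p ! i # take a (tl ?q)" using q(1) by (metis take_Suc_Cons)
  then have first': "set (take (Suc a) ?q) \<inter> set p \<subseteq> {p ! i}" using first by auto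
  have len: "Suc a < length ?q" "?q \<noteq> []" using a by auto
  then have "?q ! Suc a \<noteq> ?q ! 0" using q(2) nth_eq_iff_index_eq[of ?q "Suc a" 0] by simp
  then have "j \<noteq> i" using j q(1) by (metis nth_Cons_0)
  then consider "i < j" | "j < i" by linarith
  then show False
  proof cases
    case 1
    show False using minimal_witness_no_later_hit[OF min ci _ len(1) j(2) 1 j(1) first'] by simp
  next
    case 2
    let ?n = "length p"
    have "collider E (rev p) (?n - 1 - i)" "rev p ! (?n - 1 - i) = p ! i"
      using ci i by (simp_all add: collider_rev rev_nth)
    moreover have "?q ! Suc a = rev p ! (?n - 1 - j)" using j by (simp add: rev_nth)
    moreover have "?n - 1 - i < ?n - 1 - j" "?n - 1 - j < length (rev p)" using 2 i by auto
    ultimately show False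
      using minimal_witness_no_later_hit[OF minimal_d_connecting_rev[OF min],
          of "?n - 1 - i" "Suc a" "?n - 1 - j"] len(1) first'
      by simp
  qed
qed

lemma minimal_witness_avoids_outside_segment:
  assumes min: "minimal_d_connecting V E K x y p Q" and c: "collider E p k"
    and k: "i \<le> k" "k \<le> j" "j < length p"
  shows "set (Q (p ! k)) \<inter> set (take i p @ drop (Suc j) p) = {}"
proof -
  have "distinct p"
    using min by (simp add: minimal_d_connecting_def d_connecting_def path_between_def is_path_def)
  then have "p ! k \<notin> set (take i p @ drop (Suc j) p)"
    using nth_notin_outside_segment k by blast
  moreover have "set (take i p @ drop (Suc j) p) \<subseteq> set p"
    by (auto dest: in_set_takeD in_set_dropD)
  ultimately show ?thesis
    using minimal_witness_meets_path_only_at_collider[OF min c, THEN equalityD1] by blast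
qed

lemma minimal_witnesses_disjoint:
  assumes min: "minimal_d_connecting V E K x y p Q"
    and ci: "collider E p i" and cj: "collider E p j" and ij: "i < j"
  shows "set (Q (p ! i)) \<inter> set (Q (p ! j)) = {}"
proof (rule ccontr)
  let ?q1 = "Q (p ! i)" and ?q2 = "Q (p ! j)"
  assume "set ?q1 \<inter> set ?q2 \<noteq> {}"
  then obtain a b where a: "a < length ?q1" and b: "b < length ?q2" "?q2 ! b = ?q1 ! a"
    and first: "set (take a ?q1) \<inter> set ?q2 = {}"
    by (rule first_common_element) auto
  have conn: "d_connecting V E K x y p Q" using min by (simp add: minimal_d_connecting_def)
  then have q1: "directed_path_to V E K (p ! i) ?q1" and q2: "directed_path_to V E K (p ! j) ?q2"
    using ci cj by (simp_all add: d_connecting_def)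
  have pd: "distinct p" using conn by (simp add: d_connecting_def path_between_def is_path_def)
  have jn: "j < length p" using collider_imp_Suc_less[OF cj] by simp
  have "a \<noteq> 0"
  proof
    assume "a = 0"
    then have "?q2 ! b = p ! i"
      using a b(2) q1 by (auto simp: directed_path_to_def is_directed_path_def hd_conv_nth)
    then have "p ! i \<in> set ?q2 \<inter> set p"
      using b(1) ij jn by (metis IntI nth_mem order.strict_trans)
    then show False
      using minimal_witness_meets_path_only_at_collider[OF min cj] pd ij jn
        nth_eq_iff_index_eq[of p i j] by auto
  qed
  let ?outer = "set (take i p @ drop (Suc j) p)"
  have "set ?q1 \<inter> ?outer = {}" "set ?q2 \<inter> ?outer = {}"
    using minimal_witness_avoids_outside_segment[OF min] ci cj ij jn by simp_all
  then have "set (take a ?q1 @ ?q1 ! a # rev (take b ?q2)) \<inter> ?outer = {}"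
    using a b by (auto dest: in_set_takeD intro: nth_mem)
  moreover have "distinct (take a ?q1 @ ?q1 ! a # rev (take b ?q2))"
  proof -
    have "distinct (take a ?q1 @ [?q1 ! a])" "distinct (take b ?q2 @ [?q2 ! b])"
      using q1 q2 a b(1) by (simp_all add: directed_path_to_def is_directed_path_def
          flip: take_Suc_conv_app_nth)
    then show ?thesis using first b(2) by (auto dest: in_set_takeD)
  qed
  moreover have "take b ?q2 @ [?q1 ! a] = take (Suc b) ?q2"
    using b by (simp add: take_Suc_conv_app_nth)
  with q2 have "is_directed_path V E (take b ?q2 @ [?q1 ! a])" "hd (take b ?q2 @ [?q1 ! a]) = p ! j"
    by (simp_all add: directed_path_to_def is_directed_path_take)
  moreover have "set (take a ?q1) \<inter> K = {}" "set (take b ?q2) \<inter> K = {}"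
    using minimal_witness_avoids_K[OF min] ci cj a b(1) by blast+
  moreover have "?q1 = take a ?q1 @ ?q1 ! a # drop (Suc a) ?q1" "take a ?q1 \<noteq> []"
    using a \<open>a \<noteq> 0\<close> by (auto simp: id_take_nth_drop)
  ultimately show False
    using shortcut_not_minimal[OF conn ij jn ci, of "take a ?q1" "?q1 ! a" "drop (Suc a) ?q1" "take b ?q2"]
      min cj b(1) by simp
qed

end

theorem lemma6p2:
  fixes V :: "'a set" and E :: "('a \<times> 'a) set" and K :: "'a set" and x y :: 'a
  assumes "is_dag V E" and "x \<in> V" and "y \<in> V" and "K \<subseteq> V"
    and "\<not> d_separates V E K x y"
  shows "\<exists>p. path_between V E x y p
    \<and> (\<forall>i. non_collider E p i \<longrightarrow> p ! i \<notin> K)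
    \<and> (\<exists>q :: nat \<Rightarrow> 'a list.
         (\<forall>i. collider E p i \<longrightarrow>
             is_directed_path V E (q i) \<and> hd (q i) = p ! i \<and> last (q i) \<in> K
             \<and> set (q i) \<inter> set p = {p ! i})
       \<and> (\<forall>i j. collider E p i \<and> collider E p j \<and> i \<noteq> j \<longrightarrow>
             set (q i) \<inter> set (q j) = {}))"
proof -
  interpret dag V E by unfold_locales (rule assms(1))
  obtain p Q where min: "minimal_d_connecting V E K x y p Q"
    using minimal_d_connecting_exists assms(4,5) by blast
  then have conn: "d_connecting V E K x y p Q" by (simp add: minimal_d_connecting_def)
  show ?thesis
  proof (intro exI conjI)
    show "path_between V E x y p" "\<forall>i. non_collider E p i \<longrightarrow> p ! i \<notin> K"
      using conn by (simp_all add: d_connecting_def)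
    show "\<forall>i. collider E p i \<longrightarrow> is_directed_path V E (Q (p ! i)) \<and> hd (Q (p ! i)) = p ! i
        \<and> last (Q (p ! i)) \<in> K \<and> set (Q (p ! i)) \<inter> set p = {p ! i}"
      using conn minimal_witness_meets_path_only_at_collider[OF min]
      by (simp add: d_connecting_def directed_path_to_def)
    show "\<forall>i j. collider E p i \<and> collider E p j \<and> i \<noteq> j \<longrightarrow>
        set (Q (p ! i)) \<inter> set (Q (p ! j)) = {}"
      using minimal_witnesses_disjoint[OF min] by (metis Int_commute linorder_neqE_nat)
  qed
qed

end
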